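(* Let $p\geq 5$ be a prime and let $r$ be an integer with $1\leq r\leq p-1$ that is a quadratic nonresidue modulo $p$. Then for all $n\geq 0$, $d_{p-1}(pn+r)\equiv 0\pmod p$.
   Context: For each integer $k\geq 1$, the numbers $d_k(n)$ are defined by $\sum_{n\geq 0} d_k(n)q^n = \frac{f_2^k}{f_1^{3k+1}}$, where $f_r = \prod_{i\geq 1}(1-q^{ri})$. *)

theory Defs
  imports "HOL-Computational_Algebra.Formal_Power_Series" "HOL-Number_Theory.Number_Theory"
begin

(* f_r = prod_{i>=1} (1 - q^(r i)) as a formal power series over the rationals.
   Its n-th coefficient equals that of the finite product over 1 <= i <= n
   (the factors with i > n do not affect coefficients up to degree n, for r >= 1). *)
definition f_eta :: "nat \<Rightarrow> rat fps" where
  "f_eta r = Abs_fps (\<lambda>n. fps_nth (\<Prod>i\<in>{1..n}. (1 - fps_X ^ (r * i))) n)"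

definition d :: "nat \<Rightarrow> nat \<Rightarrow> rat" where
  "d k n = fps_nth (f_eta 2 ^ k * inverse (f_eta 1 ^ (3 * k + 1))) n"

end

(*
  Let D be the generating function of d_(p-1), so that D f_1^(3p-2) = f_2^(p-1). Gauss's
  identity f_1^2 = f_2 theta, with theta = sum_k (-1)^k q^(k^2), gives D f_1^(3p) = f_2^p theta.
  Modulo p we have f_1^(3p) = f_p^3 and f_2^p = f_(2p), so D f_p^3 is congruent to f_(2p) theta,
  whose exponents are all of the form p t + k^2. For a nonresidue r none of them is congruent to
  r, so the coefficients of D f_p^3 at p n + r are divisible by p; since f_p^3 is a series in
  q^p with constant term 1, the same holds for D.

  Gauss's identity is used in truncated form. It comes from the finite triple product
  (q; q^2)_n^2 = sum_j (-1)^(j+n) [2n, j]_(q^2) q^((j-n)^2), proved by induction on n from the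
  two q-Pascal rules.
*)

theory Submission
  imports Defs
begin

unbundle fps_syntax

section \<open>Truncated eta products\<close>

definition eta_partial :: "nat \<Rightarrow> nat \<Rightarrow> 'a::comm_ring_1 fps" where
  "eta_partial r M = (\<Prod>i\<in>{1..M}. (1 - fps_X ^ (r * i)))"

definition fps_agree :: "nat \<Rightarrow> 'a::comm_ring_1 fps \<Rightarrow> 'a fps \<Rightarrow> bool" where
  "fps_agree N A B \<longleftrightarrow> (\<forall>n\<le>N. A $ n = B $ n)"

lemma fps_agree_refl [simp]: "fps_agree N A A"
  by (simp add: fps_agree_def)

lemma fps_agree_sym: "fps_agree N A B \<Longrightarrow> fps_agree N B A"
  by (simp add: fps_agree_def)

lemma fps_agree_trans [trans]: "fps_agree N A B \<Longrightarrow> fps_agree N B C \<Longrightarrow> fps_agree N A C"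
  by (simp add: fps_agree_def)

lemma fps_agree_mult:
  assumes "fps_agree N A B" "fps_agree N C D"
  shows "fps_agree N (A * C) (B * D)"
  unfolding fps_agree_def fps_mult_nth
proof (intro allI impI)
  fix n assume "n \<le> N"
  then show "(\<Sum>i=0..n. A $ i * C $ (n - i)) = (\<Sum>i=0..n. B $ i * D $ (n - i))"
    using assms by (intro sum.cong) (simp_all add: fps_agree_def)
qed

lemma fps_agree_power: "fps_agree N A B \<Longrightarrow> fps_agree N (A ^ k) (B ^ k)"
  by (induction k) (auto intro: fps_agree_mult)

lemma fps_agree_sum:
  "(\<And>j. j \<in> S \<Longrightarrow> fps_agree N (f j) (g j)) \<Longrightarrow> fps_agree N (sum f S) (sum g S)"
  by (simp add: fps_agree_def fps_sum_nth)

lemma fps_agree_one_minus_X_power: "N < k \<Longrightarrow> fps_agree N (1 - fps_X ^ k) 1"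
  by (simp add: fps_agree_def)

lemma eta_partial_0 [simp]: "eta_partial r 0 = 1"
  by (simp add: eta_partial_def)

lemma eta_partial_Suc: "eta_partial r (Suc M) = eta_partial r M * (1 - fps_X ^ (r * Suc M))"
  by (simp add: eta_partial_def prod.nat_ivl_Suc' mult.commute)

lemma eta_partial_nth_0 [simp]: "0 < r \<Longrightarrow> eta_partial r M $ 0 = 1"
  by (induction M) (simp_all add: eta_partial_Suc)

lemma eta_partial_nonzero [simp]:
  "0 < r \<Longrightarrow> (eta_partial r M :: 'a::comm_ring_1 fps) \<noteq> 0"
  by (metis eta_partial_nth_0 fps_zero_nth zero_neq_one)

lemma eta_partial_agree:
  assumes "0 < r" "N \<le> M"
  shows "fps_agree N (eta_partial r M) (eta_partial r N)"
  using assms(2)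
proof (induction M rule: dec_induct)
  case (step M)
  have "N < Suc M" using step.hyps(1) by simp
  also have "\<dots> \<le> r * Suc M" using assms(1) by (cases r) simp_all
  finally have "N < r * Suc M" .
  from fps_agree_mult[OF step.IH fps_agree_one_minus_X_power[OF this]] show ?case
    by (simp add: eta_partial_Suc)
qed simp

lemma eta_partial_agree':
  "0 < r \<Longrightarrow> N \<le> M \<Longrightarrow> N \<le> M' \<Longrightarrow> fps_agree N (eta_partial r M) (eta_partial r M')"
  by (meson eta_partial_agree fps_agree_sym fps_agree_trans)

lemma f_eta_agree:
  assumes "0 < r" "N \<le> M"
  shows "fps_agree N (f_eta r) (eta_partial r M)"
  unfolding fps_agree_def
proof (intro allI impI)
  fix n assume "n \<le> N"
  then have "fps_agree n (eta_partial r M) (eta_partial r n :: rat fps)"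
    using assms by (intro eta_partial_agree) simp_all
  then show "f_eta r $ n = eta_partial r M $ n"
    by (simp add: f_eta_def eta_partial_def fps_agree_def)
qed

lemma f_eta_nth_0 [simp]: "0 < r \<Longrightarrow> f_eta r $ 0 = 1"
  using f_eta_agree[of r 0 0] by (simp add: fps_agree_def)

section \<open>Gaussian binomial coefficients and the finite triple product\<close>

text \<open>The Gaussian binomial coefficient \<open>[m, j]\<close> in base \<open>q\<^sup>2\<close>.\<close>
fun gauss_binomial2 :: "nat \<Rightarrow> nat \<Rightarrow> 'a::comm_ring_1 fps" where
  "gauss_binomial2 m 0 = 1"
| "gauss_binomial2 0 (Suc j) = 0"
| "gauss_binomial2 (Suc m) (Suc j) =
     gauss_binomial2 m j + fps_X ^ (2 * Suc j) * gauss_binomial2 m (Suc j)"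

lemma gauss_binomial2_eq_0: "m < j \<Longrightarrow> gauss_binomial2 m j = 0"
proof (induction m arbitrary: j)
  case 0 then show ?case by (cases j) auto
next
  case (Suc m) then show ?case by (cases j) auto
qed

lemma gauss_binomial2_mult_eta_partial:
  "j \<le> m \<Longrightarrow> gauss_binomial2 m j * eta_partial 2 j * eta_partial 2 (m - j) = eta_partial 2 m"
proof (induction m arbitrary: j)
  case (Suc m)
  show ?case
  proof (cases j)
    case (Suc i)
    with Suc.prems have "i \<le> m" by simp
    define a :: "'a fps" where "a = fps_X ^ (2 * Suc i)"
    define b :: "'a fps" where "b = fps_X ^ (2 * (m - i))"
    have ab: "a * b = fps_X ^ (2 * Suc m)"
      unfolding a_def b_def power_add[symmetric] using \<open>i \<le> m\<close> by (simp add: algebra_simps)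
    have left: "gauss_binomial2 m i * eta_partial 2 (Suc i) * eta_partial 2 (m - i)
        = eta_partial 2 m * (1 - a)"
    proof -
      have "gauss_binomial2 m i * eta_partial 2 (Suc i) * eta_partial 2 (m - i)
          = (gauss_binomial2 m i * eta_partial 2 i * eta_partial 2 (m - i)) * (1 - a)"
        by (simp only: eta_partial_Suc a_def mult_ac)
      with Suc.IH[OF \<open>i \<le> m\<close>] show ?thesis by simp
    qed
    have right: "gauss_binomial2 m (Suc i) * eta_partial 2 (Suc i) * eta_partial 2 (m - i)
        = eta_partial 2 m * (1 - b)"
    proof (cases "i < m")
      case True
      then have "m - i = Suc (m - Suc i)" by simp
      then have "gauss_binomial2 m (Suc i) * eta_partial 2 (Suc i) * eta_partial 2 (m - i)
          = gauss_binomial2 m (Suc i) * eta_partial 2 (Suc i) * eta_partial 2 (m - Suc i)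
            * (1 - b)"
        by (simp only: eta_partial_Suc b_def mult_ac)
      with Suc.IH[of "Suc i"] True show ?thesis by simp
    qed (use \<open>i \<le> m\<close> in \<open>simp add: gauss_binomial2_eq_0 b_def\<close>)
    have "gauss_binomial2 (Suc m) j * eta_partial 2 j * eta_partial 2 (Suc m - j)
        = gauss_binomial2 m i * eta_partial 2 (Suc i) * eta_partial 2 (m - i)
          + a * (gauss_binomial2 m (Suc i) * eta_partial 2 (Suc i) * eta_partial 2 (m - i))"
      by (simp add: Suc a_def algebra_simps)
    also have "\<dots> = eta_partial 2 m * (1 - a * b)"
      unfolding left right by (simp add: algebra_simps)
    also have "\<dots> = eta_partial 2 (Suc m)"
      by (simp add: ab eta_partial_Suc)
    finally show ?thesis .
  qed simp
qed simp

lemma gauss_binomial2_Suc_Suc':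
  "(gauss_binomial2 (Suc m) (Suc j) :: 'a::idom fps)
    = fps_X ^ (2 * (m - j)) * gauss_binomial2 m j + gauss_binomial2 m (Suc j)"
proof (cases "j \<le> m")
  case True
  define K :: "'a fps" where "K = eta_partial 2 (Suc j) * eta_partial 2 (m - j)"
  define a :: "'a fps" where "a = fps_X ^ (2 * Suc j)"
  define b :: "'a fps" where "b = fps_X ^ (2 * (m - j))"
  have ab: "b * a = fps_X ^ (2 * Suc m)"
    unfolding a_def b_def power_add[symmetric] using True by (simp add: algebra_simps)
  have left: "gauss_binomial2 (Suc m) (Suc j) * K = eta_partial 2 (Suc m)"
    using gauss_binomial2_mult_eta_partial[of "Suc j" "Suc m"] True by (simp add: K_def mult.assoc)
  have "b * gauss_binomial2 m j * K
      = b * (gauss_binomial2 m j * eta_partial 2 j * eta_partial 2 (m - j)) * (1 - a)"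
    by (simp only: K_def eta_partial_Suc a_def mult_ac)
  also have "\<dots> = b * eta_partial 2 m * (1 - a)"
    by (simp only: gauss_binomial2_mult_eta_partial[OF True])
  finally have right1: "b * gauss_binomial2 m j * K = b * eta_partial 2 m * (1 - a)" .
  have right2: "gauss_binomial2 m (Suc j) * K = eta_partial 2 m * (1 - b)"
  proof (cases "j < m")
    case True
    then have "m - j = Suc (m - Suc j)" by simp
    then have "gauss_binomial2 m (Suc j) * K
        = (gauss_binomial2 m (Suc j) * eta_partial 2 (Suc j) * eta_partial 2 (m - Suc j)) * (1 - b)"
      by (simp only: K_def eta_partial_Suc b_def mult_ac)
    also have "\<dots> = eta_partial 2 m * (1 - b)"
      by (simp only: gauss_binomial2_mult_eta_partial[OF Suc_leI[OF True]])
    finally show ?thesis .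
  qed (use \<open>j \<le> m\<close> in \<open>simp add: gauss_binomial2_eq_0 b_def\<close>)
  have "(b * gauss_binomial2 m j + gauss_binomial2 m (Suc j)) * K = eta_partial 2 m * (1 - b * a)"
    using right1 right2 by (simp add: algebra_simps)
  also have "\<dots> = gauss_binomial2 (Suc m) (Suc j) * K"
    by (simp only: ab eta_partial_Suc left)
  finally show ?thesis
    by (simp add: K_def b_def)
qed (simp add: gauss_binomial2_eq_0)

lemma gauss_binomial2_Suc_Suc_Suc_Suc:
  assumes "i \<le> m"
  shows "(gauss_binomial2 (Suc (Suc m)) (Suc (Suc i)) :: 'a::idom fps)
    = fps_X ^ (2 * (m - i)) * gauss_binomial2 m i
      + (1 + fps_X ^ (2 * Suc m)) * gauss_binomial2 m (Suc i)
      + fps_X ^ (2 * Suc (Suc i)) * gauss_binomial2 m (Suc (Suc i))"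
proof -
  have X: "fps_X ^ (2 * (m - i)) * fps_X ^ (2 * Suc i) = (fps_X ^ (2 * Suc m) :: 'a fps)"
    unfolding power_add[symmetric] using assms by (simp add: algebra_simps)
  have "gauss_binomial2 (Suc (Suc m)) (Suc (Suc i))
      = fps_X ^ (2 * (m - i)) * gauss_binomial2 (Suc m) (Suc i)
        + (gauss_binomial2 (Suc m) (Suc (Suc i)) :: 'a fps)"
    using gauss_binomial2_Suc_Suc'[of "Suc m" "Suc i"] by simp
  also have "\<dots> = fps_X ^ (2 * (m - i)) * gauss_binomial2 m i
      + (fps_X ^ (2 * (m - i)) * fps_X ^ (2 * Suc i)) * gauss_binomial2 m (Suc i)
      + gauss_binomial2 m (Suc i) + fps_X ^ (2 * Suc (Suc i)) * gauss_binomial2 m (Suc (Suc i))"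
    by (simp only: gauss_binomial2.simps(3) distrib_left mult.assoc add.assoc)
  finally show ?thesis
    unfolding X by (simp add: algebra_simps)
qed

lemma gauss_binomial2_Suc_Suc_1:
  "(gauss_binomial2 (Suc (Suc m)) 1 :: 'a::idom fps)
    = 1 + fps_X ^ (2 * Suc m) + fps_X ^ 2 * gauss_binomial2 m 1"
proof -
  have "gauss_binomial2 (Suc (Suc m)) 1
      = fps_X ^ (2 * Suc m) * gauss_binomial2 (Suc m) 0 + (gauss_binomial2 (Suc m) 1 :: 'a fps)"
    using gauss_binomial2_Suc_Suc'[of "Suc m" 0] by simp
  then show ?thesis
    by (simp add: numeral_2_eq_2)
qed

definition sq_diff :: "nat \<Rightarrow> nat \<Rightarrow> nat" where
  "sq_diff n j = nat ((int j - int n)^2)"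

lemma of_nat_sq_diff: "int (sq_diff n j) = (int j - int n)^2"
  by (simp add: sq_diff_def)

lemma sq_diff_Suc_Suc: "sq_diff (Suc n) (Suc j) = sq_diff n j"
  by (simp add: sq_diff_def)

lemma sq_diff_Suc_left: "2 * j + sq_diff (Suc n) j = 2 * n + 1 + sq_diff n j"
  by (rule of_nat_eq_iff[where 'a=int, THEN iffD1])
     (simp add: of_nat_sq_diff power2_eq_square algebra_simps)

lemma sq_diff_Suc_right:
  "i \<le> 2 * n \<Longrightarrow> 2 * (2 * n - i) + sq_diff n (Suc i) = 2 * n + 1 + sq_diff n i"
  by (rule of_nat_eq_iff[where 'a=int, THEN iffD1])
     (simp add: of_nat_sq_diff of_nat_diff power2_eq_square algebra_simps)

lemma sq_diff_eq: "sq_diff n j = (if n \<le> j then (j - n)^2 else (n - j)^2)"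
  by (rule of_nat_eq_iff[where 'a=int, THEN iffD1])
     (simp add: of_nat_sq_diff of_nat_diff power2_commute)

lemma sq_diff_leD:
  assumes "sq_diff n j \<le> N"
  shows "n \<le> j + N \<and> j \<le> n + N"
proof -
  have "j - n \<le> N \<and> n - j \<le> N"
    using assms
    by (cases "n \<le> j") (auto simp: sq_diff_eq power2_eq_square intro: le_trans[OF le_square])
  then show ?thesis
    by linarith
qed

lemma fps_X_power_mult_eq: "i + j = k + l \<Longrightarrow> fps_X ^ i * fps_X ^ j = fps_X ^ k * fps_X ^ l"
  unfolding power_add [symmetric] by (rule arg_cong)

definition triple_product_term :: "nat \<Rightarrow> nat \<Rightarrow> 'a::comm_ring_1 fps" where
  "triple_product_term n j = gauss_binomial2 (2 * n) j * fps_X ^ sq_diff n j"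

lemma triple_product_term_Suc_Suc_Suc:
  assumes "i \<le> 2 * n"
  shows "(triple_product_term (Suc n) (Suc (Suc i)) :: 'a::idom fps)
    = fps_X ^ (2 * n + 1) * triple_product_term n (Suc (Suc i))
      + (1 + fps_X ^ (4 * n + 2)) * triple_product_term n (Suc i)
      + fps_X ^ (2 * n + 1) * triple_product_term n i"
proof -
  let ?s = "sq_diff (Suc n) (Suc (Suc i))"
  have X1: "fps_X ^ (2 * (2 * n - i)) * fps_X ^ ?s
      = (fps_X ^ (2 * n + 1) * fps_X ^ sq_diff n i :: 'a fps)"
    using sq_diff_Suc_right[OF assms] by (intro fps_X_power_mult_eq) (simp add: sq_diff_Suc_Suc)
  have X2: "fps_X ^ (2 * Suc (Suc i)) * fps_X ^ ?s
      = (fps_X ^ (2 * n + 1) * fps_X ^ sq_diff n (Suc (Suc i)) :: 'a fps)"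
    by (intro fps_X_power_mult_eq sq_diff_Suc_left)
  have two: "2 * Suc n = Suc (Suc (2 * n))" "2 * Suc (2 * n) = 4 * n + 2"
    by simp_all
  have "triple_product_term (Suc n) (Suc (Suc i))
      = gauss_binomial2 (2 * n) i * (fps_X ^ (2 * (2 * n - i)) * fps_X ^ ?s)
        + (1 + fps_X ^ (4 * n + 2)) * gauss_binomial2 (2 * n) (Suc i) * fps_X ^ ?s
        + gauss_binomial2 (2 * n) (Suc (Suc i))
          * (fps_X ^ (2 * Suc (Suc i)) * fps_X ^ ?s :: 'a fps)"
    unfolding triple_product_term_def two gauss_binomial2_Suc_Suc_Suc_Suc[OF assms]
    by (simp add: algebra_simps)
  then show ?thesis
    unfolding X1 X2 by (simp add: triple_product_term_def sq_diff_Suc_Suc mult_ac)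
qed

definition shift_right :: "(nat \<Rightarrow> 'a::zero) \<Rightarrow> nat \<Rightarrow> 'a" where
  "shift_right f j = (case j of 0 \<Rightarrow> 0 | Suc k \<Rightarrow> f k)"

lemma triple_product_term_Suc:
  "(triple_product_term (Suc n) j :: 'a::idom fps)
    = fps_X ^ (2 * n + 1) * triple_product_term n j
      + (1 + fps_X ^ (4 * n + 2)) * shift_right (triple_product_term n) j
      + fps_X ^ (2 * n + 1) * shift_right (shift_right (triple_product_term n)) j"
proof -
  consider "j = 0" | "j = 1" | i where "j = Suc (Suc i)" "i \<le> 2 * n"
    | i where "j = Suc (Suc i)" "2 * n < i"
    by (cases j; cases "j - 1") (auto, meson not_le)
  then show ?thesis
  proof cases
    case 1
    then show ?thesis
      using sq_diff_Suc_left[of 0 n] by (simp add: triple_product_term_def shift_right_def power_add)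
  next
    case 2
    have X: "fps_X ^ 2 * fps_X ^ sq_diff (Suc n) 1
        = (fps_X ^ (2 * n + 1) * fps_X ^ sq_diff n 1 :: 'a fps)"
      using sq_diff_Suc_left[of 1 n] by (intro fps_X_power_mult_eq) simp
    have two: "2 * Suc n = Suc (Suc (2 * n))" "2 * Suc (2 * n) = 4 * n + 2"
      by simp_all
    have "triple_product_term (Suc n) 1 = (1 + fps_X ^ (4 * n + 2)) * fps_X ^ sq_diff (Suc n) 1
        + gauss_binomial2 (2 * n) 1 * (fps_X ^ 2 * fps_X ^ sq_diff (Suc n) 1 :: 'a fps)"
      unfolding triple_product_term_def two gauss_binomial2_Suc_Suc_1 by (simp add: algebra_simps)
    then show ?thesis
      unfolding X using 2 sq_diff_Suc_Suc[of n 0]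
      by (simp add: triple_product_term_def shift_right_def mult_ac)
  next
    case 3
    then show ?thesis
      by (simp add: triple_product_term_Suc_Suc_Suc shift_right_def)
  next
    case 4
    then show ?thesis
      by (simp add: triple_product_term_def shift_right_def gauss_binomial2_eq_0)
  qed
qed

lemma alternating_sum_shift_right:
  "(\<Sum>j\<le>Suc m. (-1) ^ j * shift_right f j) = - (\<Sum>j\<le>m. (-1) ^ j * f j :: 'a::comm_ring_1)"
proof -
  have "(\<Sum>j\<le>Suc m. (-1) ^ j * shift_right f j) = (\<Sum>j\<le>m. (-1) ^ Suc j * f j)"
    by (subst sum.atMost_Suc_shift) (simp add: shift_right_def)
  then show ?thesis
    by (simp add: sum_negf)
qed

definition triple_product_sum :: "nat \<Rightarrow> 'a::comm_ring_1 fps" where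
  "triple_product_sum n = (\<Sum>j\<le>2 * n. (-1) ^ j * triple_product_term n j)"

lemma triple_product_sum_extend:
  "2 * n \<le> m \<Longrightarrow> (\<Sum>j\<le>m. (-1) ^ j * triple_product_term n j) = triple_product_sum n"
  unfolding triple_product_sum_def
  by (rule sum.mono_neutral_right) (auto simp: triple_product_term_def gauss_binomial2_eq_0)

lemma triple_product_sum_Suc:
  "(triple_product_sum (Suc n) :: 'a::idom fps)
    = - ((1 - fps_X ^ (2 * n + 1))^2) * triple_product_sum n"
proof -
  define a :: "'a fps" where "a = fps_X ^ (2 * n + 1)"
  define b :: "'a fps" where "b = 1 + fps_X ^ (4 * n + 2)"
  define m where "m = Suc (2 * n)"
  have "triple_product_sum (Suc n) = (\<Sum>j\<le>Suc m. (-1) ^ j * triple_product_term (Suc n) j)"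
    by (simp add: triple_product_sum_def m_def)
  also have "\<dots> = a * (\<Sum>j\<le>Suc m. (-1) ^ j * triple_product_term n j)
      + b * (\<Sum>j\<le>Suc m. (-1) ^ j * shift_right (triple_product_term n) j)
      + a * (\<Sum>j\<le>Suc m. (-1) ^ j * shift_right (shift_right (triple_product_term n)) j)"
    by (simp add: triple_product_term_Suc a_def b_def sum.distrib sum_distrib_left algebra_simps)
  also have "\<dots> = (2 * a - b) * triple_product_sum n"
  proof -
    have ext: "(\<Sum>j\<le>m. (-1) ^ j * triple_product_term n j) = triple_product_sum n"
      "(\<Sum>j\<le>Suc m. (-1) ^ j * triple_product_term n j) = triple_product_sum n"
      by (rule triple_product_sum_extend, simp add: m_def)+
    have shift1: "(\<Sum>j\<le>Suc m. (-1) ^ j * shift_right (triple_product_term n) j)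
        = - triple_product_sum n"
      unfolding alternating_sum_shift_right ext(1) ..
    have shift2: "(\<Sum>j\<le>Suc m. (-1) ^ j * shift_right (shift_right (triple_product_term n)) j)
        = triple_product_sum n"
      unfolding m_def alternating_sum_shift_right by (simp add: triple_product_sum_def)
    show ?thesis
      unfolding ext(2) shift1 shift2 by (simp add: algebra_simps)
  qed
  also have "2 * a - b = - ((1 - fps_X ^ (2 * n + 1))^2)"
    by (simp add: a_def b_def power2_eq_square algebra_simps flip: power_add)
  finally show ?thesis .
qed

definition odd_eta_partial :: "nat \<Rightarrow> 'a::comm_ring_1 fps" where
  "odd_eta_partial n = (\<Prod>i\<in>{1..n}. (1 - fps_X ^ (2 * i - 1)))"

lemma odd_eta_partial_Suc: "odd_eta_partial (Suc n) = odd_eta_partial n * (1 - fps_X ^ (2 * n + 1))"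
  by (simp add: odd_eta_partial_def prod.nat_ivl_Suc' mult.commute)

theorem triple_product_sum_eq:
  "(triple_product_sum n :: 'a::idom fps) = (-1) ^ n * odd_eta_partial n ^ 2"
proof (induction n)
  case 0
  then show ?case
    by (simp add: triple_product_sum_def triple_product_term_def sq_diff_def odd_eta_partial_def)
next
  case (Suc n)
  then show ?case
    by (simp add: triple_product_sum_Suc odd_eta_partial_Suc power2_eq_square algebra_simps)
qed

lemma eta_partial_1_double: "eta_partial 1 (2 * n) = odd_eta_partial n * eta_partial 2 n"
proof (induction n)
  case (Suc n)
  have "eta_partial 1 (2 * Suc n)
      = eta_partial 1 (2 * n) * (1 - fps_X ^ (2 * n + 1)) * (1 - fps_X ^ (2 * Suc n))"
    by (simp add: eta_partial_Suc)
  then show ?case using Suc by (simp add: odd_eta_partial_Suc eta_partial_Suc mult_ac)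
qed (simp add: odd_eta_partial_def)

section \<open>Gauss's identity for \<open>f\<^sub>1\<^sup>2 / f\<^sub>2\<close>\<close>

lemma neg_one_power_fps: "(-1 :: 'a::comm_ring_1 fps) ^ k = fps_const ((-1) ^ k)"
proof -
  have "(-1 :: 'a fps) = fps_const (-1)"
    by (simp only: fps_const_neg [symmetric] fps_const_1_eq_1)
  then show ?thesis
    by (simp only: fps_const_power)
qed

text \<open>The theta series \<open>\<Sum>\<bar>k\<bar>\<le>n. (-1)^k q^(k^2)\<close>, indexed by \<open>j = n + k\<close>.\<close>
definition theta_partial :: "nat \<Rightarrow> 'a::comm_ring_1 fps" where
  "theta_partial n = (\<Sum>j\<le>2 * n. (-1) ^ (j + n) * fps_X ^ sq_diff n j)"

lemma theta_partial_nth_nonsquare: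
  assumes "\<nexists>k. m = k^2"
  shows "theta_partial n $ m = 0"
proof -
  have "m \<noteq> sq_diff n j" for j
    using assms by (auto simp: sq_diff_eq)
  then show ?thesis
    by (simp add: theta_partial_def fps_sum_nth neg_one_power_fps)
qed

lemma triple_product_term_mult_eta_partial_agree:
  assumes "j \<le> 2 * n" "2 * N \<le> n"
  shows "fps_agree N (triple_product_term n j * eta_partial 2 n ^ 2)
    (fps_X ^ sq_diff n j * eta_partial 2 n)"
proof (cases "N < sq_diff n j")
  case True
  have eq: "triple_product_term n j * eta_partial 2 n ^ 2
      = fps_X ^ sq_diff n j * (gauss_binomial2 (2 * n) j * eta_partial 2 n ^ 2)"
    by (simp add: triple_product_term_def mult_ac)
  show ?thesis
    unfolding fps_agree_def eq using True by (simp add: fps_X_power_mult_nth)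
next
  case False
  with assms sq_diff_leD[of n j N] have "N \<le> j" "N \<le> 2 * n - j"
    by auto
  with assms(2) have "fps_agree N (gauss_binomial2 (2 * n) j * eta_partial 2 n ^ 2)
      (gauss_binomial2 (2 * n) j * eta_partial 2 j * eta_partial 2 (2 * n - j))"
    unfolding power2_eq_square mult.assoc
    by (intro fps_agree_mult fps_agree_refl eta_partial_agree') auto
  also have "gauss_binomial2 (2 * n) j * eta_partial 2 j * eta_partial 2 (2 * n - j)
      = eta_partial 2 (2 * n)"
    using assms(1) by (rule gauss_binomial2_mult_eta_partial)
  finally have "fps_agree N (gauss_binomial2 (2 * n) j * eta_partial 2 n ^ 2) (eta_partial 2 n)"
    using assms(2) eta_partial_agree'[of 2 N "2 * n" n] fps_agree_trans by auto
  then have "fps_agree N (fps_X ^ sq_diff n j * (gauss_binomial2 (2 * n) j * eta_partial 2 n ^ 2))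
      (fps_X ^ sq_diff n j * eta_partial 2 n)"
    by (intro fps_agree_mult fps_agree_refl)
  then show ?thesis
    by (simp add: triple_product_term_def mult_ac)
qed

lemma eta_partial_1_double_square:
  "(eta_partial 1 (2 * n) ^ 2 :: 'a::idom fps)
    = (\<Sum>j\<le>2 * n. (-1) ^ (j + n) * (triple_product_term n j * eta_partial 2 n ^ 2))"
proof -
  have odd_square: "odd_eta_partial n ^ 2 = (-1) ^ n * (triple_product_sum n :: 'a fps)"
    by (simp only: triple_product_sum_eq mult.assoc [symmetric] minus_one_mult_self mult_1_left)
  have "eta_partial 1 (2 * n) ^ 2
      = (-1) ^ n * triple_product_sum n * (eta_partial 2 n ^ 2 :: 'a fps)"
    unfolding eta_partial_1_double power_mult_distrib odd_square ..
  then show ?thesis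
    by (simp add: triple_product_sum_def sum_distrib_left sum_distrib_right power_add mult_ac)
qed

theorem f_eta_1_square_agree:
  assumes "2 * N \<le> n"
  shows "fps_agree N (f_eta 1 ^ 2) (f_eta 2 * theta_partial n)"
proof -
  have "fps_agree N (f_eta 1 ^ 2) (eta_partial 1 (2 * n) ^ 2)"
    using assms by (intro fps_agree_power f_eta_agree) auto
  also have "eta_partial 1 (2 * n) ^ 2
      = (\<Sum>j\<le>2 * n. (-1) ^ (j + n) * (triple_product_term n j * eta_partial 2 n ^ 2) :: rat fps)"
    by (rule eta_partial_1_double_square)
  also have "fps_agree N \<dots> (\<Sum>j\<le>2 * n. (-1) ^ (j + n) * (fps_X ^ sq_diff n j * eta_partial 2 n))"
    by (intro fps_agree_sum fps_agree_mult[OF fps_agree_refl]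
        triple_product_term_mult_eta_partial_agree)
       (use assms in auto)
  also have "(\<Sum>j\<le>2 * n. (-1) ^ (j + n) * (fps_X ^ sq_diff n j * eta_partial 2 n))
      = theta_partial n * eta_partial 2 n"
    unfolding theta_partial_def sum_distrib_right by (simp add: mult_ac)
  also have "fps_agree N \<dots> (theta_partial n * f_eta 2)"
    using assms by (intro fps_agree_mult fps_agree_refl fps_agree_sym[OF f_eta_agree]) auto
  finally show ?thesis
    by (simp only: mult.commute)
qed

section \<open>Congruences modulo \<open>p\<close>\<close>

definition int_multiple :: "nat \<Rightarrow> 'a::comm_ring_1 \<Rightarrow> bool" where
  "int_multiple p x \<longleftrightarrow> (\<exists>m::int. x = of_int (int p * m))"

definition integral_fps :: "'a::comm_ring_1 fps \<Rightarrow> bool" where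
  "integral_fps A \<longleftrightarrow> (\<forall>n. A $ n \<in> \<int>)"

definition fps_cong :: "nat \<Rightarrow> 'a::comm_ring_1 fps \<Rightarrow> 'a fps \<Rightarrow> bool" where
  "fps_cong p A B \<longleftrightarrow> (\<forall>n. int_multiple p ((A - B) $ n))"

lemma int_multiple_0 [simp]: "int_multiple p 0"
  by (auto simp: int_multiple_def intro: exI[of _ 0])

lemma int_multiple_add: "int_multiple p x \<Longrightarrow> int_multiple p y \<Longrightarrow> int_multiple p (x + y)"
  unfolding int_multiple_def by (metis distrib_left of_int_add)

lemma int_multiple_diff: "int_multiple p x \<Longrightarrow> int_multiple p y \<Longrightarrow> int_multiple p (x - y)"
  unfolding int_multiple_def by (metis right_diff_distrib of_int_diff)

lemma int_multiple_mult_Ints: "int_multiple p x \<Longrightarrow> y \<in> \<int> \<Longrightarrow> int_multiple p (x * y)"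
  unfolding int_multiple_def by (auto elim!: Ints_cases) (metis mult.assoc of_int_mult)

lemma int_multiple_Ints_mult: "int_multiple p x \<Longrightarrow> y \<in> \<int> \<Longrightarrow> int_multiple p (y * x)"
  using int_multiple_mult_Ints by (simp add: mult.commute)

lemma int_multiple_sum: "(\<And>i. i \<in> S \<Longrightarrow> int_multiple p (f i)) \<Longrightarrow> int_multiple p (sum f S)"
  by (induction S rule: infinite_finite_induct) (auto intro: int_multiple_add)

lemma int_multiple_of_nat: "p dvd m \<Longrightarrow> int_multiple p (of_nat m)"
  unfolding int_multiple_def by (auto elim!: dvdE intro: exI[of _ "int _"])

lemma integral_fps_1 [simp]: "integral_fps 1"
  by (simp add: integral_fps_def)

lemma integral_fps_X_power [simp]: "integral_fps (fps_X ^ k)"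
  by (simp add: integral_fps_def)

lemma integral_fps_diff: "integral_fps A \<Longrightarrow> integral_fps B \<Longrightarrow> integral_fps (A - B)"
  by (simp add: integral_fps_def)

lemma integral_fps_mult: "integral_fps A \<Longrightarrow> integral_fps B \<Longrightarrow> integral_fps (A * B)"
  unfolding integral_fps_def fps_mult_nth by (auto intro!: Ints_sum Ints_mult)

lemma integral_fps_power: "integral_fps A \<Longrightarrow> integral_fps (A ^ k)"
  by (induction k) (auto intro: integral_fps_mult)

lemma integral_fps_eta_partial [simp]: "integral_fps (eta_partial r M)"
  by (induction M) (auto simp: eta_partial_Suc intro!: integral_fps_mult integral_fps_diff)

lemma integral_fps_f_eta [simp]: "integral_fps (f_eta r)"
  using integral_fps_eta_partial[of r, where 'a=rat]
  by (simp add: integral_fps_def f_eta_def eta_partial_def)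

lemma integral_fps_theta_partial: "integral_fps (theta_partial n)"
  by (auto simp: theta_partial_def integral_fps_def fps_sum_nth neg_one_power_fps intro!: Ints_sum)

lemma integral_fps_quotient:
  assumes "A * B = C" "B $ 0 = 1" "integral_fps B" "integral_fps C"
  shows "integral_fps A"
  unfolding integral_fps_def
proof
  fix n
  show "A $ n \<in> \<int>"
  proof (induction n rule: less_induct)
    case (less n)
    have "C $ n = (\<Sum>i<n. A $ i * B $ (n - i)) + A $ n"
      unfolding assms(1) [symmetric] fps_mult_nth atLeast0AtMost
      by (simp add: assms(2) flip: lessThan_Suc_atMost)
    then have "A $ n = C $ n - (\<Sum>i<n. A $ i * B $ (n - i))"
      by (simp add: algebra_simps)
    also have "\<dots> \<in> \<int>"
      using assms(3,4) less by (auto simp: integral_fps_def intro!: Ints_diff Ints_sum Ints_mult)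
    finally show ?case .
  qed
qed

lemma fps_cong_refl [simp]: "fps_cong p A A"
  by (simp add: fps_cong_def)

lemma fps_cong_mult:
  assumes "fps_cong p A B" "fps_cong p C D" "integral_fps A" "integral_fps D"
  shows "fps_cong p (A * C) (B * D)"
  unfolding fps_cong_def
proof
  fix n
  have "A * C - B * D = A * (C - D) + (A - B) * D"
    by (simp add: algebra_simps)
  moreover have "int_multiple p ((A * (C - D)) $ n)"
    using assms unfolding fps_cong_def integral_fps_def fps_mult_nth
    by (auto intro!: int_multiple_sum int_multiple_Ints_mult)
  moreover have "int_multiple p (((A - B) * D) $ n)"
    using assms unfolding fps_cong_def integral_fps_def fps_mult_nth
    by (auto intro!: int_multiple_sum int_multiple_mult_Ints)
  ultimately show "int_multiple p ((A * C - B * D) $ n)"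
    by (simp add: int_multiple_add)
qed

lemma fps_cong_power:
  "fps_cong p A B \<Longrightarrow> integral_fps A \<Longrightarrow> integral_fps B \<Longrightarrow> fps_cong p (A ^ k) (B ^ k)"
  by (induction k) (auto intro: fps_cong_mult integral_fps_power)

lemma coeff_one_minus_X_power_pow:
  "((1 - fps_X ^ a :: 'a::comm_ring_1 fps) ^ m) $ n
    = (\<Sum>k\<le>m. of_nat (m choose k) * (-1) ^ k * (if n = a * k then 1 else 0))"
proof -
  have coeff_term: "(of_nat (m choose k) * (- (fps_X ^ a)) ^ k * 1 ^ (m - k) :: 'a fps) $ n
      = of_nat (m choose k) * (-1) ^ k * (if n = a * k then 1 else 0)" for k
  proof -
    have "(- (fps_X ^ a :: 'a fps)) ^ k = fps_const ((-1) ^ k) * fps_X ^ (a * k)"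
      by (subst power_minus) (simp only: neg_one_power_fps power_mult)
    moreover have "(of_nat (m choose k) :: 'a fps) = fps_const (of_nat (m choose k))"
      by (simp add: fps_of_nat)
    ultimately show ?thesis
      by (simp add: mult.assoc)
  qed
  have "(1 - fps_X ^ a :: 'a fps) ^ m = (- (fps_X ^ a) + 1) ^ m"
    by simp
  then show ?thesis
    by (simp only: binomial_ring fps_sum_nth coeff_term)
qed

lemma int_multiple_neg_one_power_plus_1: "prime p \<Longrightarrow> int_multiple p ((-1) ^ p + 1 :: 'a::comm_ring_1)"
proof (cases "p = 2")
  case True
  then show ?thesis
    by (auto simp: int_multiple_def intro: exI[of _ 1])
next
  case False
  assume "prime p"
  with False have "2 < p"
    using prime_ge_2_nat[of p] by linarith
  with \<open>prime p\<close> have "odd p"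
    by (rule prime_odd_nat)
  then show ?thesis
    by simp
qed

lemma one_minus_X_power_pow_prime_cong:
  assumes "prime p"
  shows "fps_cong p ((1 - fps_X ^ a :: 'a::comm_ring_1 fps) ^ p) (1 - fps_X ^ (p * a))"
  unfolding fps_cong_def
proof
  fix n
  define g :: "nat \<Rightarrow> 'a"
    where "g k = of_nat (p choose k) * (-1) ^ k * (if n = a * k then 1 else 0)" for k
  have "p \<noteq> 0"
    using assms by auto
  have "((1 - fps_X ^ a :: 'a fps) ^ p) $ n = (\<Sum>k\<in>insert 0 (insert p {1..<p}). g k)"
    unfolding coeff_one_minus_X_power_pow g_def [symmetric]
    by (rule sum.cong) (use \<open>p \<noteq> 0\<close> in auto)
  also have "\<dots> = g 0 + g p + (\<Sum>k\<in>{1..<p}. g k)"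
    using \<open>p \<noteq> 0\<close> by (simp add: add.assoc)
  also have "g 0 = (1 :: 'a fps) $ n"
    by (simp add: g_def)
  also have "g p = (-1) ^ p * (fps_X ^ (p * a) :: 'a fps) $ n"
    by (simp add: g_def mult.commute)
  finally have eq: "((1 - fps_X ^ a) ^ p - (1 - fps_X ^ (p * a))) $ n
      = ((-1) ^ p + 1) * (fps_X ^ (p * a) :: 'a fps) $ n + (\<Sum>k\<in>{1..<p}. g k)"
    by (simp add: algebra_simps)
  have "int_multiple p (g k)" if "k \<in> {1..<p}" for k
  proof -
    from that assms have "p dvd (p choose k)"
      by (intro dvd_choose_prime) auto
    then show ?thesis
      unfolding g_def by (intro int_multiple_mult_Ints int_multiple_of_nat) auto
  qed
  then have middle: "int_multiple p (\<Sum>k\<in>{1..<p}. g k)"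
    by (rule int_multiple_sum)
  have "int_multiple p (((-1) ^ p + 1) * (fps_X ^ (p * a) :: 'a fps) $ n)"
    using int_multiple_neg_one_power_plus_1[OF assms] by (rule int_multiple_mult_Ints) simp
  from int_multiple_add[OF this middle]
  show "int_multiple p (((1 - fps_X ^ a) ^ p - (1 - fps_X ^ (p * a)) :: 'a fps) $ n)"
    unfolding eq .
qed

lemma eta_partial_pow_prime_cong:
  assumes "prime p"
  shows "fps_cong p (eta_partial r M ^ p :: 'a::comm_ring_1 fps) (eta_partial (p * r) M)"
proof (induction M)
  case (Suc M)
  have "fps_cong p (eta_partial r M ^ p * (1 - fps_X ^ (r * Suc M)) ^ p :: 'a fps)
      (eta_partial (p * r) M * (1 - fps_X ^ (p * (r * Suc M))))"
    by (intro fps_cong_mult Suc one_minus_X_power_pow_prime_cong[OF assms] integral_fps_power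
        integral_fps_diff integral_fps_1 integral_fps_X_power integral_fps_eta_partial)
  then show ?case
    by (simp only: eta_partial_Suc power_mult_distrib mult.assoc)
qed simp

lemma f_eta_pow_prime_cong:
  assumes "prime p" "0 < r"
  shows "fps_cong p (f_eta r ^ p) (f_eta (p * r))"
  unfolding fps_cong_def
proof
  fix n
  have "0 < p * r"
    using assms prime_gt_0_nat by simp
  then have "fps_agree n (f_eta (p * r)) (eta_partial (p * r) n)"
    by (intro f_eta_agree) simp_all
  moreover have "fps_agree n (f_eta r ^ p) (eta_partial r n ^ p)"
    using assms(2) by (intro fps_agree_power f_eta_agree) simp_all
  ultimately show "int_multiple p ((f_eta r ^ p - f_eta (p * r)) $ n)"
    using eta_partial_pow_prime_cong[OF assms(1), of r n] by (auto simp: fps_cong_def fps_agree_def)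
qed

section \<open>Power series in \<open>q\<^sup>p\<close>\<close>

definition supported_on_multiples :: "nat \<Rightarrow> 'a::comm_ring_1 fps \<Rightarrow> bool" where
  "supported_on_multiples p A \<longleftrightarrow> (\<forall>i. \<not> p dvd i \<longrightarrow> A $ i = 0)"

lemma supported_on_multiples_mult:
  assumes "supported_on_multiples p A" "supported_on_multiples p B"
  shows "supported_on_multiples p (A * B)"
  unfolding supported_on_multiples_def
proof (intro allI impI)
  fix n
  assume n: "\<not> p dvd n"
  have "A $ i * B $ (n - i) = 0" if "i \<le> n" for i
  proof (cases "p dvd i")
    case True
    with n that have "\<not> p dvd (n - i)"
      using dvd_add by fastforce
    with assms(2) show ?thesis
      by (simp add: supported_on_multiples_def)
  qed (use assms(1) in \<open>simp add: supported_on_multiples_def\<close>)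
  then show "(A * B) $ n = 0"
    by (simp add: fps_mult_nth)
qed

lemma supported_on_multiples_power: "supported_on_multiples p A \<Longrightarrow> supported_on_multiples p (A ^ k)"
proof (induction k)
  case (Suc k)
  then show ?case
    by (simp add: supported_on_multiples_mult)
qed (simp add: supported_on_multiples_def)

lemma supported_on_multiples_eta_partial: "supported_on_multiples p (eta_partial (p * s) M)"
proof (induction M)
  case (Suc M)
  have "supported_on_multiples p (1 - fps_X ^ (p * (s * Suc M)) :: 'a fps)"
    by (auto simp: supported_on_multiples_def)
  with Suc show ?case
    unfolding eta_partial_Suc mult.assoc by (rule supported_on_multiples_mult)
qed (simp add: supported_on_multiples_def)

lemma supported_on_multiples_f_eta: "supported_on_multiples p (f_eta (p * s))"
  using supported_on_multiples_eta_partial[of p s, where 'a=rat]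
  by (simp add: supported_on_multiples_def f_eta_def eta_partial_def)

lemma below_residue_class:
  fixes p :: nat
  assumes "r < p" "i < p * n + r" "p dvd (p * n + r - i)"
  obtains t where "t < n" "i = p * t + r"
proof
  have "i mod p = (p * n + r) mod p"
    using assms(2,3) mod_eq_dvd_iff_nat[of i "p * n + r" p] by simp
  with assms(1) show i: "i = p * (i div p) + r"
    using div_mult_mod_eq[of i p] by (simp add: mult.commute)
  show "i div p < n"
  proof (rule ccontr)
    assume "\<not> i div p < n"
    then have "p * n \<le> p * (i div p)" by simp
    with i assms(2) show False by linarith
  qed
qed

lemma int_multiple_coeff_quotient:
  assumes "integral_fps D" "integral_fps G" "G $ 0 = 1" "supported_on_multiples p G" "r < p"
    and "\<And>n. int_multiple p ((D * G) $ (p * n + r))"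
  shows "int_multiple p (D $ (p * n + r))"
proof (induction n rule: less_induct)
  case (less n)
  define N where "N = p * n + r"
  define S where "S = (\<Sum>i<N. D $ i * G $ (N - i))"
  have split: "(D * G) $ N = S + D $ N"
    by (simp add: S_def fps_mult_nth atLeast0AtMost assms(3) flip: lessThan_Suc_atMost)
  moreover have "int_multiple p S"
    unfolding S_def
  proof (rule int_multiple_sum)
    fix i
    assume "i \<in> {..<N}"
    then have "i < N" by simp
    show "int_multiple p (D $ i * G $ (N - i))"
    proof (cases "p dvd (N - i)")
      case True
      with assms(5) \<open>i < N\<close> obtain t where "t < n" "i = p * t + r"
        unfolding N_def by (rule below_residue_class)
      with less assms(2) show ?thesis
        by (simp add: integral_fps_def int_multiple_mult_Ints)
    qed (use assms(4) in \<open>simp add: supported_on_multiples_def\<close>)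
  qed
  moreover have "int_multiple p ((D * G) $ N)"
    unfolding N_def by (rule assms(6))
  ultimately have "int_multiple p ((D * G) $ N - S)"
    by (intro int_multiple_diff)
  also have "(D * G) $ N - S = D $ N"
    by (simp add: split)
  finally show ?case
    unfolding N_def .
qed

lemma nonresidue_ne_square_plus_multiple:
  assumes "\<not> QuadRes (int p) (int r)" "k^2 + p * t = p * n + r"
  shows False
proof -
  have "k^2 mod p = (k^2 + p * t) mod p"
    by simp
  also have "\<dots> = r mod p"
    unfolding assms(2) by simp
  finally have "[k^2 = r] (mod p)"
    unfolding cong_def .
  then have "[(int k)^2 = int r] (mod int p)"
    using cong_int_iff by force
  with assms(1) show False
    unfolding QuadRes_def by blast
qed

lemma nonresidue_coeff_eq_0:
  assumes "supported_on_multiples p A" "\<not> QuadRes (int p) (int r)"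
  shows "(A * theta_partial m) $ (p * n + r) = 0"
proof -
  have "A $ i * theta_partial m $ (p * n + r - i) = 0" if "i \<le> p * n + r" for i
  proof (cases "p dvd i")
    case True
    then obtain t where t: "i = p * t" ..
    have "\<nexists>k. p * n + r - i = k^2"
    proof
      assume "\<exists>k. p * n + r - i = k^2"
      then obtain k where "p * n + r - i = k^2" ..
      with that t have "k^2 + p * t = p * n + r"
        by linarith
      with assms(2) show False
        by (rule nonresidue_ne_square_plus_multiple)
    qed
    then show ?thesis
      by (simp add: theta_partial_nth_nonsquare)
  qed (use assms(1) in \<open>simp add: supported_on_multiples_def\<close>)
  then show ?thesis
    by (simp add: fps_mult_nth)
qed

section \<open>The generating function of \<open>d\<^sub>k\<close>\<close>

lemma d_series_mult: "Abs_fps (d k) * f_eta 1 ^ (3 * k + 1) = f_eta 2 ^ k"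
proof -
  have "Abs_fps (d k) = f_eta 2 ^ k * inverse (f_eta 1 ^ (3 * k + 1))"
    by (simp add: d_def fps_eq_iff)
  moreover have "inverse (f_eta 1 ^ (3 * k + 1)) * f_eta 1 ^ (3 * k + 1) = 1"
    by (rule inverse_mult_eq_1) (simp add: fps_power_zeroth)
  ultimately show ?thesis
    by (simp only: mult.assoc mult_1_right)
qed

lemma integral_fps_d_series: "integral_fps (Abs_fps (d k))"
  by (intro integral_fps_quotient[OF d_series_mult] fps_power_zeroth_eq_one integral_fps_power
      integral_fps_f_eta f_eta_nth_0) simp

lemma d_series_mult_agree:
  "fps_agree N (Abs_fps (d k) * f_eta 1 ^ (3 * k + 3)) (f_eta 2 ^ Suc k * theta_partial (2 * N))"
proof -
  have "3 * k + 3 = (3 * k + 1) + 2"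
    by simp
  then have "Abs_fps (d k) * f_eta 1 ^ (3 * k + 3)
      = Abs_fps (d k) * f_eta 1 ^ (3 * k + 1) * f_eta 1 ^ 2"
    by (simp only: power_add mult.assoc)
  also have "\<dots> = f_eta 2 ^ k * f_eta 1 ^ 2"
    by (simp only: d_series_mult)
  also have "fps_agree N \<dots> (f_eta 2 ^ k * (f_eta 2 * theta_partial (2 * N)))"
    by (intro fps_agree_mult fps_agree_refl f_eta_1_square_agree) simp
  also have "\<dots> = f_eta 2 ^ Suc k * theta_partial (2 * N)"
    by (simp add: mult_ac)
  finally show ?thesis .
qed

lemma d_series_mult_eta_cube_coeff:
  assumes "prime p" "\<not> QuadRes (int p) (int r)"
  shows "int_multiple p ((Abs_fps (d (p - 1)) * f_eta p ^ 3) $ (p * n + r))"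
proof -
  define D where "D = Abs_fps (d (p - 1))"
  define N where "N = p * n + r"
  have p: "Suc (p - 1) = p" "3 * (p - 1) + 3 = p * 3"
    using prime_gt_0_nat[OF assms(1)] by simp_all
  have "fps_cong p ((f_eta 1 ^ p) ^ 3) (f_eta p ^ 3)"
    using f_eta_pow_prime_cong[OF assms(1), of 1] by (simp add: fps_cong_power integral_fps_power)
  then have cong1: "fps_cong p (D * f_eta 1 ^ (p * 3)) (D * f_eta p ^ 3)"
    unfolding D_def power_mult
    by (intro fps_cong_mult fps_cong_refl integral_fps_d_series integral_fps_power
        integral_fps_f_eta)
  have agree: "fps_agree N (D * f_eta 1 ^ (p * 3)) (f_eta 2 ^ p * theta_partial (2 * N))"
    using d_series_mult_agree[of N "p - 1"] unfolding D_def p .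
  have cong2: "fps_cong p (f_eta 2 ^ p * theta_partial (2 * N))
      (f_eta (p * 2) * theta_partial (2 * N))"
    by (intro fps_cong_mult fps_cong_refl f_eta_pow_prime_cong[OF assms(1)] integral_fps_power
        integral_fps_f_eta integral_fps_theta_partial) simp
  have vanish: "(f_eta (p * 2) * theta_partial (2 * N)) $ N = 0"
    unfolding N_def using supported_on_multiples_f_eta assms(2) by (rule nonresidue_coeff_eq_0)
  have "(D * f_eta p ^ 3) $ N
      = (f_eta 2 ^ p * theta_partial (2 * N) - f_eta (p * 2) * theta_partial (2 * N)) $ N
        - (D * f_eta 1 ^ (p * 3) - D * f_eta p ^ 3) $ N"
    using agree vanish by (simp add: fps_agree_def)
  also have "int_multiple p \<dots>"
    using cong1 cong2 unfolding fps_cong_def by (blast intro: int_multiple_diff)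
  finally show ?thesis
    by (simp only: D_def N_def)
qed

theorem theorem4p3:
  fixes p :: nat and r :: nat and n :: nat
  assumes "prime p" and "p \<ge> 5"
    and "1 \<le> r" and "r \<le> p - 1"
    and "\<not> QuadRes (int p) (int r)"
  shows "\<exists>m :: int. d (p - 1) (p * n + r) = of_int (int p * m)"
proof -
  have "r < p"
    using assms(4) prime_gt_0_nat[OF assms(1)] by linarith
  have "int_multiple p (Abs_fps (d (p - 1)) $ (p * n + r))"
  proof (rule int_multiple_coeff_quotient)
    show "supported_on_multiples p (f_eta p ^ 3)"
      using supported_on_multiples_f_eta[of p 1] by (simp add: supported_on_multiples_power)
    show "\<And>n. int_multiple p ((Abs_fps (d (p - 1)) * f_eta p ^ 3) $ (p * n + r))"
      using assms(1,5) by (rule d_series_mult_eta_cube_coeff)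
  qed (simp_all add: \<open>r < p\<close> integral_fps_d_series integral_fps_power fps_power_zeroth
      prime_gt_0_nat assms(1))
  then show ?thesis
    by (simp add: int_multiple_def)
qed

end
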